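(* Let $k\ge 4$ be an integer and let $T=[a,a+h]\times[b,b+h]\subset\mathbb R^2$ be a square of side $h>0$ with lower-left vertex $\mathbf x_1=(a,b)$. Let $$V_T=\{v\in Q_k(T):\ \partial_{\mathbf n}v|_e\in Q_{k-1}(e)\ \text{for each of the four edges } e \text{ of } T\}.$$ Consider the following linear functionals on $V_T$: (i) $v\mapsto v(\mathbf x_1+\tfrac{h}{k-2}(i,j))$ for $i,j=0,\dots,k-2$; (ii) $v\mapsto \partial_x v(\mathbf x_1+h(i,\tfrac{j}{k-3}))$ for $i=0,1$, $j=0,\dots,k-3$; (iii) $v\mapsto \partial_y v(\mathbf x_1+h(\tfrac{i}{k-3},j))$ for $i=0,\dots,k-3$, $j=0,1$; (iv) $v\mapsto \partial_{xy} v(\mathbf x_1+h(i,j))$ for $i,j=0,1$. Then this set of degrees of freedom uniquely determines a function of $V_T$: for any prescribed values of these functionals there exists exactly one $v\in V_T$ attaining them.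
   Context: $Q_k$ denotes the space of polynomials of degree at most $k$ in each variable separately, i.e. $Q_k=\mathrm{span}\{x_1^{k_1}\cdots x_d^{k_d}:0\le k_i\le k\}$ in dimension $d$; on an edge $e$ (a segment) $Q_{k-1}(e)$ means polynomials of degree at most $k-1$ in the variable along the edge. $\partial_{\mathbf n}$ denotes the derivative in the direction normal to the edge $e$ (i.e. $\partial_y$ on horizontal edges, $\partial_x$ on vertical edges), and the condition means that its restriction to $e$ is a polynomial of degree at most $k-1$ along $e$. *)

theory Defs
  imports "HOL-Analysis.Analysis"
begin

definition Qk :: "nat \<Rightarrow> (real \<Rightarrow> real \<Rightarrow> real) \<Rightarrow> bool" where
  "Qk k v \<longleftrightarrow> (\<exists>c :: nat \<Rightarrow> nat \<Rightarrow> real.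
      \<forall>x y. v x y = (\<Sum>i\<le>k. \<Sum>j\<le>k. c i j * x ^ i * y ^ j))"

definition poly1_on :: "nat \<Rightarrow> real set \<Rightarrow> (real \<Rightarrow> real) \<Rightarrow> bool" where
  "poly1_on n S f \<longleftrightarrow> (\<exists>c :: nat \<Rightarrow> real. \<forall>t\<in>S. f t = (\<Sum>i\<le>n. c i * t ^ i))"

definition dx :: "(real \<Rightarrow> real \<Rightarrow> real) \<Rightarrow> real \<Rightarrow> real \<Rightarrow> real" where
  "dx v x y = deriv (\<lambda>t. v t y) x"

definition dy :: "(real \<Rightarrow> real \<Rightarrow> real) \<Rightarrow> real \<Rightarrow> real \<Rightarrow> real" where
  "dy v x y = deriv (\<lambda>s. v x s) y"

definition dxy :: "(real \<Rightarrow> real \<Rightarrow> real) \<Rightarrow> real \<Rightarrow> real \<Rightarrow> real" where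
  "dxy v x y = deriv (\<lambda>s. dx v x s) y"

text \<open>V_T for T = [a,a+h] x [b,b+h]: normal derivative on each edge is in Q_{k-1}(e).
  Horizontal edges y=b, y=b+h (normal derivative d/dy), vertical edges x=a, x=a+h (d/dx).\<close>
definition VT :: "nat \<Rightarrow> real \<Rightarrow> real \<Rightarrow> real \<Rightarrow> (real \<Rightarrow> real \<Rightarrow> real) set" where
  "VT k a b h = {v. Qk k v
      \<and> poly1_on (k - 1) {a..a+h} (\<lambda>x. dy v x b)
      \<and> poly1_on (k - 1) {a..a+h} (\<lambda>x. dy v x (b + h))
      \<and> poly1_on (k - 1) {b..b+h} (\<lambda>y. dx v a y)
      \<and> poly1_on (k - 1) {b..b+h} (\<lambda>y. dx v (a + h) y)}"

end

theory Submission
  imports Defs "HOL-Computational_Algebra.Polynomial" "Jordan_Normal_Form.Determinant"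
begin

text \<open>
  The coefficients \<open>c\<^sub>p\<^sub>q\<close> (\<open>p, q \<le> k\<close>) of \<open>v \<in> Q\<^sub>k\<close> are \<open>(k+1)\<^sup>2\<close> unknowns. Membership in \<open>V\<^sub>T\<close>
  imposes four linear conditions (on each edge the coefficient of degree \<open>k\<close> of the normal
  derivative vanishes), and there are \<open>(k-1)\<^sup>2 + 4(k-2) + 4 = (k+1)\<^sup>2 - 4\<close> degrees of freedom, so
  prescribing them is a square linear system and it suffices that vanishing degrees of freedom
  force \<open>v = 0\<close>.

  This is shown line by line, each time for a one-variable polynomial of degree at most \<open>n + 2\<close>
  that vanishes at \<open>n + 1\<close> equispaced points and has a critical point at both ends, hence is zero:
  first \<open>\<partial>\<^sub>xv\<close> on the vertical edges (the end conditions are the values of \<open>\<partial>\<^sub>x\<^sub>yv\<close>), then \<open>v\<close>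
  on the horizontal grid lines, then \<open>\<partial>\<^sub>yv\<close> on the horizontal edges, and finally \<open>v\<close> on every
  vertical line.
\<close>

(* The vector notation \<open>$\<close> of HOL-Analysis clashes with that of Jordan_Normal_Form. *)
unbundle no vec_syntax

section \<open>One-variable polynomials\<close>

lemma double_root_dvd:
  fixes p :: "real poly"
  assumes "poly p r = 0" and "poly (pderiv p) r = 0"
  shows "[:-r, 1:]^2 dvd p"
proof -
  obtain q where q: "p = [:-r, 1:] * q"
    using assms(1) poly_eq_0_iff_dvd by blast
  have "pderiv p = [:-r, 1:] * pderiv q + q * pderiv [:-r, 1:]"
    unfolding q by (rule pderiv_mult)
  then have "poly q r = 0" using assms(2) by (simp add: pderiv_pCons)
  then obtain q' where "q = [:-r, 1:] * q'"
    using poly_eq_0_iff_dvd by blast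
  then have "p = [:-r, 1:]^2 * q'" unfolding q by (simp only: power2_eq_square mult.assoc)
  then show ?thesis by simp
qed

lemma poly_eq_0_if_two_double_roots:
  fixes p :: "real poly"
  assumes "finite S" and "degree p \<le> card S + 1" and roots: "\<forall>x\<in>S. poly p x = 0"
    and r: "r1 \<in> S" "r2 \<in> S" "r1 \<noteq> r2"
    and crit: "poly (pderiv p) r1 = 0" "poly (pderiv p) r2 = 0"
  shows "p = 0"
proof (rule ccontr)
  assume "p \<noteq> 0"
  obtain q1 where q1: "p = [:-r1, 1:]^2 * q1"
    using double_root_dvd roots r crit by blast
  have "poly q1 r2 = 0" using q1 roots r by auto
  moreover have "poly (pderiv q1) r2 = 0"
    using crit(2) q1 r \<open>poly q1 r2 = 0\<close> by (simp add: pderiv_mult)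
  ultimately obtain q where q: "q1 = [:-r2, 1:]^2 * q"
    using double_root_dvd by blast
  have p: "p = ([:-r1, 1:]^2 * [:-r2, 1:]^2) * q" using q1 q by (simp add: mult.assoc)
  have "q \<noteq> 0" using \<open>p \<noteq> 0\<close> p by auto
  have "degree p = 4 + degree q"
    unfolding p using \<open>q \<noteq> 0\<close> by (simp add: degree_mult_eq degree_power_eq)
  have "S - {r1, r2} \<subseteq> {x. poly q x = 0}"
    using roots r by (auto simp: p)
  then have "card (S - {r1, r2}) \<le> card {x. poly q x = 0}"
    using card_mono[OF poly_roots_finite[OF \<open>q \<noteq> 0\<close>]] by blast
  also have "\<dots> \<le> degree q"
    using card_poly_roots_bound[OF \<open>q \<noteq> 0\<close>] .
  finally have "card (S - {r1, r2}) \<le> degree q" .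
  moreover have "card (S - {r1, r2}) = card S - 2"
    using r \<open>finite S\<close> by (simp add: card_Diff_subset)
  moreover have "card S \<ge> 2"
    using card_mono[OF \<open>finite S\<close>, of "{r1, r2}"] r by simp
  ultimately show False using \<open>degree p = 4 + degree q\<close> assms(2) by linarith
qed

lemma poly1_on_UNIV_imp_poly:
  assumes "poly1_on n UNIV f"
  obtains P where "degree P \<le> n" and "f = poly P"
proof -
  from assms obtain g where g: "\<And>t. f t = (\<Sum>i\<le>n. g i * t ^ i)"
    unfolding poly1_on_def by blast
  show ?thesis
  proof
    show "degree (\<Sum>i\<le>n. monom (g i) i) \<le> n"
      by (rule degree_sum_le) (auto intro: order.trans[OF degree_monom_le])
    show "f = poly (\<Sum>i\<le>n. monom (g i) i)"
      by (intro ext) (simp add: g poly_sum poly_monom)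
  qed
qed

lemma poly1_on_sum_monomials: "poly1_on n S (\<lambda>t. \<Sum>i\<le>n. g i * t ^ i)"
  unfolding poly1_on_def by blast

lemma poly1_on_pred_degree_iff:
  assumes "infinite S" and "n > 0"
  shows "poly1_on (n - 1) S (\<lambda>t. \<Sum>i\<le>n. g i * t ^ i) \<longleftrightarrow> g n = 0"
proof -
  obtain m where n: "n = Suc m" using \<open>n > 0\<close> gr0_implies_Suc by blast
  show ?thesis
  proof
    assume "poly1_on (n - 1) S (\<lambda>t. \<Sum>i\<le>n. g i * t ^ i)"
    then obtain e where e: "\<forall>t\<in>S. (\<Sum>i\<le>n. g i * t ^ i) = (\<Sum>i\<le>m. e i * t ^ i)"
      unfolding poly1_on_def n by auto
    define d where "d i = (if i \<le> m then g i - e i else g i)" for i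
    have "(\<Sum>i\<le>m. d i * t ^ i) = (\<Sum>i\<le>m. (g i - e i) * t ^ i)" for t
      by (rule sum.cong) (auto simp: d_def)
    then have "(\<Sum>i\<le>n. d i * t ^ i) = (\<Sum>i\<le>n. g i * t ^ i) - (\<Sum>i\<le>m. e i * t ^ i)" for t
      by (simp add: n d_def algebra_simps sum_subtractf)
    then have "S \<subseteq> {t. (\<Sum>i\<le>n. d i * t ^ i) = 0}" using e by auto
    then have "infinite {t. (\<Sum>i\<le>n. d i * t ^ i) = 0}"
      using \<open>infinite S\<close> finite_subset by blast
    then have "d n = 0" using polyfun_finite_roots by blast
    then show "g n = 0" by (simp add: d_def n)
  next
    assume "g n = 0"
    then show "poly1_on (n - 1) S (\<lambda>t. \<Sum>i\<le>n. g i * t ^ i)"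
      unfolding poly1_on_def by (intro exI[of _ g]) (simp add: n)
  qed
qed

lemma poly1_eq_0_if_grid_zeros_and_critical_ends:
  assumes "poly1_on (n + 2) UNIV f" and "n > 0" and "h \<noteq> 0"
    and zeros: "\<forall>i\<le>n. f (lo + h * real i / real n) = 0"
    and "deriv f lo = 0" and "deriv f (lo + h) = 0"
  shows "f t = 0"
proof -
  obtain P where "degree P \<le> n + 2" and f: "f = poly P"
    using assms(1) by (rule poly1_on_UNIV_imp_poly)
  define S where "S = (\<lambda>i. lo + h * real i / real n) ` {..n}"
  have "inj_on (\<lambda>i. lo + h * real i / real n) {..n}"
    using \<open>h \<noteq> 0\<close> \<open>n > 0\<close> by (auto simp: inj_on_def field_simps)
  then have "card S = n + 1" by (simp add: S_def card_image)
  have "lo \<in> S" unfolding S_def by (rule image_eqI[of _ _ 0]) auto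
  moreover have "lo + h \<in> S" unfolding S_def by (rule image_eqI[of _ _ n]) (use \<open>n > 0\<close> in auto)
  moreover have "deriv f x = poly (pderiv P) x" for x
    unfolding f by (rule DERIV_imp_deriv[OF poly_DERIV])
  ultimately have "P = 0"
    using poly_eq_0_if_two_double_roots[of S P lo "lo + h"] assms zeros \<open>card S = n + 1\<close>
      \<open>degree P \<le> n + 2\<close> by (auto simp: S_def f)
  then show ?thesis by (simp add: f)
qed

section \<open>The space \<open>Q\<^sub>k\<close>\<close>

definition Qk_poly :: "nat \<Rightarrow> (nat \<Rightarrow> nat \<Rightarrow> real) \<Rightarrow> real \<Rightarrow> real \<Rightarrow> real" where
  "Qk_poly k c x y = (\<Sum>i\<le>k. \<Sum>j\<le>k. c i j * x ^ i * y ^ j)"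

lemma Qk_iff_Qk_poly: "Qk k v \<longleftrightarrow> (\<exists>c. v = Qk_poly k c)"
  by (auto simp: Qk_def Qk_poly_def fun_eq_iff)

lemma Qk_poly_x_section: "Qk_poly k c t y = (\<Sum>i\<le>k. (\<Sum>j\<le>k. c i j * y ^ j) * t ^ i)"
  unfolding Qk_poly_def by (simp add: sum_distrib_left sum_distrib_right mult_ac)

lemma Qk_poly_y_section: "Qk_poly k c x s = (\<Sum>j\<le>k. (\<Sum>i\<le>k. c i j * x ^ i) * s ^ j)"
  unfolding Qk_poly_def by (subst sum.swap) (simp add: sum_distrib_left sum_distrib_right mult_ac)

lemma Qk_poly_eq_0_iff: "(\<forall>x y. Qk_poly k c x y = 0) \<longleftrightarrow> (\<forall>i\<le>k. \<forall>j\<le>k. c i j = 0)"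
proof
  assume "\<forall>x y. Qk_poly k c x y = 0"
  then have "(\<Sum>j\<le>k. c i j * y ^ j) = 0" if "i \<le> k" for i y
    using polyfun_eq_0[of "\<lambda>i. \<Sum>j\<le>k. c i j * y ^ j" k] that by (simp add: Qk_poly_x_section)
  then show "\<forall>i\<le>k. \<forall>j\<le>k. c i j = 0"
    using polyfun_eq_0[of "c _" k] by blast
qed (simp add: Qk_poly_def)

lemma dx_Qk_poly: "dx (Qk_poly k c) x y = (\<Sum>i\<le>k. \<Sum>j\<le>k. c i j * (real i * x ^ (i - 1)) * y ^ j)"
  unfolding dx_def Qk_poly_def
  by (rule DERIV_imp_deriv) (auto intro!: derivative_eq_intros simp: mult_ac)

lemma dy_Qk_poly: "dy (Qk_poly k c) x y = (\<Sum>i\<le>k. \<Sum>j\<le>k. c i j * x ^ i * (real j * y ^ (j - 1)))"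
  unfolding dy_def Qk_poly_def
  by (rule DERIV_imp_deriv) (auto intro!: derivative_eq_intros simp: mult_ac)

lemma dxy_Qk_poly:
  "dxy (Qk_poly k c) x y = (\<Sum>i\<le>k. \<Sum>j\<le>k. c i j * (real i * x ^ (i - 1)) * (real j * y ^ (j - 1)))"
  unfolding dxy_def dx_Qk_poly
  by (rule DERIV_imp_deriv) (auto intro!: derivative_eq_intros simp: mult_ac)

lemma deriv_dy_Qk_poly: "deriv (\<lambda>t. dy (Qk_poly k c) t y) x = dxy (Qk_poly k c) x y"
  unfolding dy_Qk_poly dxy_Qk_poly
  by (rule DERIV_imp_deriv) (auto intro!: derivative_eq_intros simp: mult_ac)

lemma dx_Qk_poly_y_section:
  "dx (Qk_poly k c) x = (\<lambda>s. \<Sum>j\<le>k. (\<Sum>i\<le>k. c i j * (real i * x ^ (i - 1))) * s ^ j)"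
  unfolding dx_Qk_poly fun_eq_iff by (subst sum.swap) (simp add: sum_distrib_left sum_distrib_right mult_ac)

lemma dy_Qk_poly_x_section:
  "dy (Qk_poly k c) t y = (\<Sum>i\<le>k. (\<Sum>j\<le>k. c i j * (real j * y ^ (j - 1))) * t ^ i)"
  unfolding dy_Qk_poly by (simp add: sum_distrib_left sum_distrib_right mult_ac)

lemma Qk_poly_in_VT_iff:
  assumes "k > 0" and "h > 0"
  shows "Qk_poly k c \<in> VT k a b h \<longleftrightarrow>
    (\<forall>y\<in>{b, b + h}. (\<Sum>j\<le>k. c k j * (real j * y ^ (j - 1))) = 0) \<and>
    (\<forall>x\<in>{a, a + h}. (\<Sum>i\<le>k. c i k * (real i * x ^ (i - 1))) = 0)"
proof -
  note top_coeff_iff = poly1_on_pred_degree_iff[OF infinite_Icc \<open>k > 0\<close>, simplified]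
  show ?thesis
    using assms by (auto simp: VT_def Qk_iff_Qk_poly dx_Qk_poly_y_section dy_Qk_poly_x_section
        top_coeff_iff)
qed

section \<open>Unisolvence\<close>

definition matches_dofs ::
    "nat \<Rightarrow> real \<Rightarrow> real \<Rightarrow> real \<Rightarrow> (nat \<Rightarrow> nat \<Rightarrow> real) \<Rightarrow> (nat \<Rightarrow> nat \<Rightarrow> real) \<Rightarrow>
      (nat \<Rightarrow> nat \<Rightarrow> real) \<Rightarrow> (nat \<Rightarrow> nat \<Rightarrow> real) \<Rightarrow> (real \<Rightarrow> real \<Rightarrow> real) \<Rightarrow> bool" where
  "matches_dofs k a b h A B C D v \<longleftrightarrow>
    (\<forall>i\<le>k-2. \<forall>j\<le>k-2.
          v (a + h * real i / real (k-2)) (b + h * real j / real (k-2)) = A i j)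
    \<and> (\<forall>i\<le>1. \<forall>j\<le>k-3.
          dx v (a + h * real i) (b + h * real j / real (k-3)) = B i j)
    \<and> (\<forall>i\<le>k-3. \<forall>j\<le>1.
          dy v (a + h * real i / real (k-3)) (b + h * real j) = C i j)
    \<and> (\<forall>i\<le>1. \<forall>j\<le>1.
          dxy v (a + h * real i) (b + h * real j) = D i j)"

lemma VT_normal_derivs_eq_0_if_dofs_eq_0:
  assumes "k \<ge> 4" and "h > 0" and "v \<in> VT k a b h"
    and "matches_dofs k a b h (\<lambda>_ _. 0) (\<lambda>_ _. 0) (\<lambda>_ _. 0) (\<lambda>_ _. 0) v"
  shows "x \<in> {a, a + h} \<Longrightarrow> dx v x y = 0" and "y \<in> {b, b + h} \<Longrightarrow> dy v x y = 0"
proof -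
  obtain c where v: "v = Qk_poly k c"
    using \<open>v \<in> VT k a b h\<close> by (auto simp: VT_def Qk_iff_Qk_poly)
  have "k > 0" "k - 3 > 0" "k - 3 + 2 = k - 1"
    using \<open>k \<ge> 4\<close> by auto
  have dx_val: "\<forall>j\<le>k - 3. \<forall>x'\<in>{a, a + h}. dx v x' (b + h * real j / real (k - 3)) = 0"
    and dy_val: "\<forall>i\<le>k - 3. \<forall>y'\<in>{b, b + h}. dy v (a + h * real i / real (k - 3)) y' = 0"
    and dxy_val: "\<forall>x'\<in>{a, a + h}. \<forall>y'\<in>{b, b + h}. dxy v x' y' = 0"
    using assms(4) by (auto simp: matches_dofs_def le_Suc_eq)
  note top_coeff_iff = poly1_on_pred_degree_iff[OF infinite_UNIV_char_0 \<open>k > 0\<close>]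
  have top: "\<forall>y\<in>{b, b + h}. (\<Sum>j\<le>k. c k j * (real j * y ^ (j - 1))) = 0"
    "\<forall>x\<in>{a, a + h}. (\<Sum>i\<le>k. c i k * (real i * x ^ (i - 1))) = 0"
    using \<open>v \<in> VT k a b h\<close> Qk_poly_in_VT_iff[OF \<open>k > 0\<close> \<open>h > 0\<close>] by (simp_all add: v)
  show "dx v x y = 0" if "x \<in> {a, a + h}"
  proof (rule poly1_eq_0_if_grid_zeros_and_critical_ends[where f = "dx v x" and n = "k - 3" and h = h and lo = b])
    have "poly1_on (k - 1) UNIV (dx v x)"
      unfolding v dx_Qk_poly_y_section top_coeff_iff using top(2) that by auto
    then show "poly1_on (k - 3 + 2) UNIV (dx v x)"
      using \<open>k - 3 + 2 = k - 1\<close> by simp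
    show "deriv (dx v x) b = 0" "deriv (dx v x) (b + h) = 0"
      using dxy_val that unfolding dxy_def by auto
  qed (use dx_val that \<open>k - 3 > 0\<close> \<open>h > 0\<close> in auto)
  show "dy v x y = 0" if "y \<in> {b, b + h}"
  proof (rule poly1_eq_0_if_grid_zeros_and_critical_ends[where f = "\<lambda>t. dy v t y" and n = "k - 3" and h = h and lo = a])
    have "poly1_on (k - 1) UNIV (\<lambda>t. dy v t y)"
      unfolding v dy_Qk_poly_x_section top_coeff_iff using top(1) that by auto
    then show "poly1_on (k - 3 + 2) UNIV (\<lambda>t. dy v t y)"
      using \<open>k - 3 + 2 = k - 1\<close> by simp
    show "deriv (\<lambda>t. dy v t y) a = 0" "deriv (\<lambda>t. dy v t y) (a + h) = 0"
      using dxy_val that unfolding v deriv_dy_Qk_poly by auto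
  qed (use dy_val that \<open>k - 3 > 0\<close> \<open>h > 0\<close> in auto)
qed

lemma VT_eq_0_if_dofs_eq_0:
  assumes "k \<ge> 4" and "h > 0" and "v \<in> VT k a b h"
    and "matches_dofs k a b h (\<lambda>_ _. 0) (\<lambda>_ _. 0) (\<lambda>_ _. 0) (\<lambda>_ _. 0) v"
  shows "v x y = 0"
proof -
  obtain c where v: "v = Qk_poly k c"
    using \<open>v \<in> VT k a b h\<close> by (auto simp: VT_def Qk_iff_Qk_poly)
  have "k - 2 > 0" "k - 2 + 2 = k"
    using \<open>k \<ge> 4\<close> by auto
  have val: "\<forall>i\<le>k - 2. \<forall>j\<le>k - 2. v (a + h * real i / real (k - 2)) (b + h * real j / real (k - 2)) = 0"
    using assms(4) by (simp add: matches_dofs_def)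
  note edges = VT_normal_derivs_eq_0_if_dofs_eq_0[OF assms]
  have rows: "v t (b + h * real j / real (k - 2)) = 0" if "j \<le> k - 2" for j t
  proof (rule poly1_eq_0_if_grid_zeros_and_critical_ends
      [where f = "\<lambda>t. v t (b + h * real j / real (k - 2))" and n = "k - 2" and h = h and lo = a])
    show "poly1_on (k - 2 + 2) UNIV (\<lambda>t. v t (b + h * real j / real (k - 2)))"
      unfolding \<open>k - 2 + 2 = k\<close> v Qk_poly_x_section by (rule poly1_on_sum_monomials)
    show "deriv (\<lambda>t. v t (b + h * real j / real (k - 2))) a = 0"
      "deriv (\<lambda>t. v t (b + h * real j / real (k - 2))) (a + h) = 0"
      using edges(1) unfolding dx_def by auto
  qed (use val that \<open>k - 2 > 0\<close> \<open>h > 0\<close> in auto)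
  show "v x y = 0"
  proof (rule poly1_eq_0_if_grid_zeros_and_critical_ends[where f = "v x" and n = "k - 2" and h = h and lo = b])
    show "poly1_on (k - 2 + 2) UNIV (v x)"
      unfolding \<open>k - 2 + 2 = k\<close> v Qk_poly_y_section by (rule poly1_on_sum_monomials)
    show "deriv (v x) b = 0" "deriv (v x) (b + h) = 0"
      using edges(2) unfolding dy_def by auto
  qed (use rows \<open>k - 2 > 0\<close> \<open>h > 0\<close> in auto)
qed

section \<open>Square linear systems\<close>

lemma square_linear_system_solvable:
  fixes F :: "'r \<Rightarrow> 'x \<Rightarrow> 'a::field"
  assumes "finite R" and "finite X" and "card R = card X"
    and injective: "\<And>c. \<forall>r\<in>R. (\<Sum>x\<in>X. F r x * c x) = 0 \<Longrightarrow> \<forall>x\<in>X. c x = 0"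
  shows "\<exists>c. \<forall>r\<in>R. (\<Sum>x\<in>X. F r x * c x) = y r"
proof -
  define n where "n = card X"
  obtain \<rho> where \<rho>: "bij_betw \<rho> {0..<n} R"
    using ex_bij_betw_nat_finite[OF \<open>finite R\<close>] assms(3) n_def by auto
  obtain \<xi> where \<xi>: "bij_betw \<xi> {0..<n} X"
    using ex_bij_betw_nat_finite[OF \<open>finite X\<close>] n_def by auto
  define M :: "'a mat" where "M = mat n n (\<lambda>(p, q). F (\<rho> p) (\<xi> q))"
  define coeffs :: "'a vec \<Rightarrow> 'x \<Rightarrow> 'a" where "coeffs u x = u $ inv_into {0..<n} \<xi> x" for u x
  have M: "M \<in> carrier_mat n n" by (simp add: M_def)
  have coeffs_\<xi>: "coeffs u (\<xi> q) = u $ q" if "q < n" for u q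
    using that \<xi> by (simp add: coeffs_def bij_betw_inv_into_left)
  have row: "(M *\<^sub>v u) $ p = (\<Sum>x\<in>X. F (\<rho> p) x * coeffs u x)"
    if "p < n" and "u \<in> carrier_vec n" for p u
  proof -
    have "(M *\<^sub>v u) $ p = (\<Sum>q\<in>{0..<n}. F (\<rho> p) (\<xi> q) * u $ q)"
      using that by (simp add: M_def scalar_prod_def)
    also have "\<dots> = (\<Sum>q\<in>{0..<n}. F (\<rho> p) (\<xi> q) * coeffs u (\<xi> q))"
      by (intro sum.cong) (auto simp: coeffs_\<xi>)
    also have "\<dots> = (\<Sum>x\<in>X. F (\<rho> p) x * coeffs u x)"
      by (rule sum.reindex_bij_betw[OF \<xi>])
    finally show ?thesis .
  qed
  have R_eq: "R = \<rho> ` {0..<n}" using \<rho> by (simp add: bij_betw_def)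
  have "det M \<noteq> 0"
  proof
    assume "det M = 0"
    then obtain u where u: "u \<in> carrier_vec n" "u \<noteq> 0\<^sub>v n" "M *\<^sub>v u = 0\<^sub>v n"
      using det_0_iff_vec_prod_zero_field[OF M] by blast
    have "\<forall>r\<in>R. (\<Sum>x\<in>X. F r x * coeffs u x) = 0"
      using row[OF _ u(1)] u(3) unfolding R_eq by (metis atLeastLessThan_iff imageE index_zero_vec(1))
    then have "\<forall>x\<in>X. coeffs u x = 0" by (rule injective)
    then have "u $ q = 0" if "q < n" for q
      using coeffs_\<xi>[OF that] bij_betw_apply[OF \<xi>, of q] that by auto
    then have "u = 0\<^sub>v n"
      using u(1) by (intro eq_vecI) auto
    with u(2) show False ..
  qed
  then obtain B where B: "B \<in> carrier_mat n n" "M * B = 1\<^sub>m n"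
    using det_non_zero_imp_unit[OF M, of "()"] unfolding Units_def ring_mat_def by auto
  define u where "u = B *\<^sub>v vec n (\<lambda>p. y (\<rho> p))"
  have u: "u \<in> carrier_vec n" using B(1) by (simp add: u_def)
  have "M *\<^sub>v u = vec n (\<lambda>p. y (\<rho> p))"
    using B by (simp add: u_def assoc_mult_mat_vec[symmetric, OF M])
  then have "\<forall>r\<in>R. (\<Sum>x\<in>X. F r x * coeffs u x) = y r"
    using row[OF _ u] unfolding R_eq by auto
  then show ?thesis by blast
qed

section \<open>The interpolation system\<close>

datatype constraint =
    Value_at nat nat | Dx_at nat nat | Dy_at nat nat | Dxy_at nat nat
  | Horizontal_edge nat | Vertical_edge nat

definition constraints :: "nat \<Rightarrow> constraint set" where
  "constraints k =
     case_prod Value_at ` ({..k - 2} \<times> {..k - 2}) \<union> case_prod Dx_at ` ({..1} \<times> {..k - 3})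
     \<union> case_prod Dy_at ` ({..k - 3} \<times> {..1}) \<union> case_prod Dxy_at ` ({..1} \<times> {..1})
     \<union> Horizontal_edge ` {..1} \<union> Vertical_edge ` {..1}"

lemma ball_constraints_iff:
  "(\<forall>r\<in>constraints k. P r) \<longleftrightarrow>
     (\<forall>i\<le>k - 2. \<forall>j\<le>k - 2. P (Value_at i j)) \<and> (\<forall>i\<le>1. \<forall>j\<le>k - 3. P (Dx_at i j)) \<and>
     (\<forall>i\<le>k - 3. \<forall>j\<le>1. P (Dy_at i j)) \<and> (\<forall>i\<le>1. \<forall>j\<le>1. P (Dxy_at i j)) \<and>
     (\<forall>j\<le>1. P (Horizontal_edge j)) \<and> (\<forall>i\<le>1. P (Vertical_edge i))"
  unfolding constraints_def by auto

lemma card_constraints: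
  assumes "k \<ge> 4"
  shows "card (constraints k) = card ({..k} \<times> {..k})"
proof -
  obtain m where k: "k = m + 4" using assms le_Suc_ex add.commute by metis
  have "card (constraints k) = (m + 3) * (m + 3) + 2 * (m + 2) + (m + 2) * 2 + 4 + 2 + 2"
    unfolding constraints_def k
    by (subst card_Un_disjoint; auto simp: card_image inj_on_def card_cartesian_product algebra_simps)+
  then show ?thesis by (simp add: k card_cartesian_product algebra_simps)
qed

text \<open>\<open>constraint_weight k a b h r p q\<close> is the value of the functional \<open>r\<close> at the monomial
  \<open>x\<^sup>p y\<^sup>q\<close>; the edge rows extract the coefficient of \<open>x\<^sup>k\<close> in \<open>\<partial>\<^sub>yv(\<cdot>, b + jh)\<close> and of
  \<open>y\<^sup>k\<close> in \<open>\<partial>\<^sub>xv(a + ih, \<cdot>)\<close>.\<close>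
fun constraint_weight :: "nat \<Rightarrow> real \<Rightarrow> real \<Rightarrow> real \<Rightarrow> constraint \<Rightarrow> nat \<Rightarrow> nat \<Rightarrow> real" where
  "constraint_weight k a b h (Value_at i j) p q =
     (a + h * real i / real (k - 2)) ^ p * (b + h * real j / real (k - 2)) ^ q"
| "constraint_weight k a b h (Dx_at i j) p q =
     real p * (a + h * real i) ^ (p - 1) * (b + h * real j / real (k - 3)) ^ q"
| "constraint_weight k a b h (Dy_at i j) p q =
     (a + h * real i / real (k - 3)) ^ p * (real q * (b + h * real j) ^ (q - 1))"
| "constraint_weight k a b h (Dxy_at i j) p q =
     real p * (a + h * real i) ^ (p - 1) * (real q * (b + h * real j) ^ (q - 1))"
| "constraint_weight k a b h (Horizontal_edge j) p q =
     (if p = k then real q * (b + h * real j) ^ (q - 1) else 0)"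
| "constraint_weight k a b h (Vertical_edge i) p q =
     (if q = k then real p * (a + h * real i) ^ (p - 1) else 0)"

fun constraint_value ::
    "(nat \<Rightarrow> nat \<Rightarrow> real) \<Rightarrow> (nat \<Rightarrow> nat \<Rightarrow> real) \<Rightarrow> (nat \<Rightarrow> nat \<Rightarrow> real) \<Rightarrow>
      (nat \<Rightarrow> nat \<Rightarrow> real) \<Rightarrow> constraint \<Rightarrow> real" where
  "constraint_value A B C D (Value_at i j) = A i j"
| "constraint_value A B C D (Dx_at i j) = B i j"
| "constraint_value A B C D (Dy_at i j) = C i j"
| "constraint_value A B C D (Dxy_at i j) = D i j"
| "constraint_value A B C D (Horizontal_edge j) = 0"
| "constraint_value A B C D (Vertical_edge i) = 0"

definition constraint_eval ::
    "nat \<Rightarrow> real \<Rightarrow> real \<Rightarrow> real \<Rightarrow> constraint \<Rightarrow> (nat \<Rightarrow> nat \<Rightarrow> real) \<Rightarrow> real" where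
  "constraint_eval k a b h r c = (\<Sum>p\<le>k. \<Sum>q\<le>k. constraint_weight k a b h r p q * c p q)"

lemma constraint_eval_dofs:
  "constraint_eval k a b h (Value_at i j) c =
     Qk_poly k c (a + h * real i / real (k - 2)) (b + h * real j / real (k - 2))"
  "constraint_eval k a b h (Dx_at i j) c = dx (Qk_poly k c) (a + h * real i) (b + h * real j / real (k - 3))"
  "constraint_eval k a b h (Dy_at i j) c = dy (Qk_poly k c) (a + h * real i / real (k - 3)) (b + h * real j)"
  "constraint_eval k a b h (Dxy_at i j) c = dxy (Qk_poly k c) (a + h * real i) (b + h * real j)"
  by (simp_all add: constraint_eval_def Qk_poly_def dx_Qk_poly dy_Qk_poly dxy_Qk_poly mult_ac)

lemma constraint_eval_edges:
  "constraint_eval k a b h (Horizontal_edge j) c = (\<Sum>q\<le>k. c k q * (real q * (b + h * real j) ^ (q - 1)))"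
  "constraint_eval k a b h (Vertical_edge i) c = (\<Sum>p\<le>k. c p k * (real p * (a + h * real i) ^ (p - 1)))"
proof -
  have "constraint_weight k a b h (Horizontal_edge j) p q * c p q =
      (if p = k then c k q * (real q * (b + h * real j) ^ (q - 1)) else 0)" for p q
    by simp
  then show "constraint_eval k a b h (Horizontal_edge j) c = (\<Sum>q\<le>k. c k q * (real q * (b + h * real j) ^ (q - 1)))"
    unfolding constraint_eval_def by (subst sum.swap) simp
  have "constraint_weight k a b h (Vertical_edge i) p q * c p q =
      (if q = k then c p k * (real p * (a + h * real i) ^ (p - 1)) else 0)" for p q
    by simp
  then show "constraint_eval k a b h (Vertical_edge i) c = (\<Sum>p\<le>k. c p k * (real p * (a + h * real i) ^ (p - 1)))"
    unfolding constraint_eval_def by simp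
qed

lemma Qk_poly_constraints_iff:
  assumes "k \<ge> 4" and "h > 0"
  shows "Qk_poly k c \<in> VT k a b h \<and> matches_dofs k a b h A B C D (Qk_poly k c) \<longleftrightarrow>
    (\<forall>r\<in>constraints k. constraint_eval k a b h r c = constraint_value A B C D r)"
  using assms
  by (auto simp: ball_constraints_iff matches_dofs_def Qk_poly_in_VT_iff constraint_eval_dofs
      constraint_eval_edges le_Suc_eq)

lemma constraint_system_injective:
  assumes "k \<ge> 4" and "h > 0" and "\<forall>r\<in>constraints k. constraint_eval k a b h r c = 0"
  shows "\<forall>p\<le>k. \<forall>q\<le>k. c p q = 0"
proof -
  let ?O = "\<lambda>_ _. 0 :: real"
  have "constraint_value ?O ?O ?O ?O r = 0" for r by (cases r) simp_all
  then have "Qk_poly k c \<in> VT k a b h \<and> matches_dofs k a b h ?O ?O ?O ?O (Qk_poly k c)"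
    using assms by (simp add: Qk_poly_constraints_iff)
  then have "\<forall>x y. Qk_poly k c x y = 0"
    using VT_eq_0_if_dofs_eq_0[OF assms(1,2)] by blast
  then show ?thesis by (simp add: Qk_poly_eq_0_iff)
qed

lemma exists_Qk_poly_with_dofs:
  assumes "k \<ge> 4" and "h > 0"
  shows "\<exists>c. Qk_poly k c \<in> VT k a b h \<and> matches_dofs k a b h A B C D (Qk_poly k c)"
proof -
  let ?F = "\<lambda>r (p, q). constraint_weight k a b h r p q"
  have eval: "constraint_eval k a b h r (curry c) = (\<Sum>x\<in>{..k} \<times> {..k}. ?F r x * c x)" for r c
    by (simp add: constraint_eval_def sum.cartesian_product case_prod_beta)
  have "\<exists>c. \<forall>r\<in>constraints k. (\<Sum>x\<in>{..k} \<times> {..k}. ?F r x * c x) = constraint_value A B C D r"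
  proof (rule square_linear_system_solvable)
    show "finite (constraints k)" by (simp add: constraints_def)
    show "card (constraints k) = card ({..k} \<times> {..k})" using assms(1) by (rule card_constraints)
    fix c :: "nat \<times> nat \<Rightarrow> real"
    assume "\<forall>r\<in>constraints k. (\<Sum>x\<in>{..k} \<times> {..k}. ?F r x * c x) = 0"
    then have "\<forall>r\<in>constraints k. constraint_eval k a b h r (curry c) = 0"
      by (simp add: eval)
    then have "\<forall>p\<le>k. \<forall>q\<le>k. curry c p q = 0"
      by (rule constraint_system_injective[OF assms])
    then show "\<forall>x\<in>{..k} \<times> {..k}. c x = 0" by auto
  qed simp
  then obtain c where "\<forall>r\<in>constraints k. constraint_eval k a b h r (curry c) = constraint_value A B C D r"
    unfolding eval by blast
  then show ?thesis using Qk_poly_constraints_iff[OF assms] by blast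
qed

lemma VT_dofs_unique:
  assumes "k \<ge> 4" and "h > 0" and "v \<in> VT k a b h" and "w \<in> VT k a b h"
    and "matches_dofs k a b h A B C D v" and "matches_dofs k a b h A B C D w"
  shows "v = w"
proof -
  obtain c d where v: "v = Qk_poly k c" and w: "w = Qk_poly k d"
    using assms(3,4) by (auto simp: VT_def Qk_iff_Qk_poly)
  have "\<forall>r\<in>constraints k. constraint_eval k a b h r c = constraint_value A B C D r"
    "\<forall>r\<in>constraints k. constraint_eval k a b h r d = constraint_value A B C D r"
    using assms by (simp_all add: v w flip: Qk_poly_constraints_iff[OF assms(1,2)])
  moreover have "constraint_eval k a b h r (\<lambda>p q. c p q - d p q) =
      constraint_eval k a b h r c - constraint_eval k a b h r d" for r
    by (simp add: constraint_eval_def algebra_simps sum_subtractf)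
  ultimately have "\<forall>p\<le>k. \<forall>q\<le>k. c p q - d p q = 0"
    by (intro constraint_system_injective[OF assms(1,2), of a b]) simp
  then show "v = w" by (auto simp: v w Qk_poly_def fun_eq_iff intro!: sum.cong)
qed

theorem lemma2p1:
  fixes k :: nat and a b h :: real
    and A B C D :: "nat \<Rightarrow> nat \<Rightarrow> real"
  assumes "k \<ge> 4" and "h > 0"
  shows "\<exists>!v. v \<in> VT k a b h
    \<and> (\<forall>i\<le>k-2. \<forall>j\<le>k-2.
          v (a + h * real i / real (k-2)) (b + h * real j / real (k-2)) = A i j)
    \<and> (\<forall>i\<le>1. \<forall>j\<le>k-3.
          dx v (a + h * real i) (b + h * real j / real (k-3)) = B i j)
    \<and> (\<forall>i\<le>k-3. \<forall>j\<le>1.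
          dy v (a + h * real i / real (k-3)) (b + h * real j) = C i j)
    \<and> (\<forall>i\<le>1. \<forall>j\<le>1.
          dxy v (a + h * real i) (b + h * real j) = D i j)"
proof -
  have "\<exists>!v. v \<in> VT k a b h \<and> matches_dofs k a b h A B C D v"
    using exists_Qk_poly_with_dofs[OF assms] VT_dofs_unique[OF assms] by blast
  then show ?thesis unfolding matches_dofs_def .
qed

end
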